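(* Assume (B1)–(B3). Let $\lambda>0$, $c_k>0$, $p_{k-1}\in\mathbb{R}^\ell$, $z_{k-1}\in\mathbb{R}^n$, $\sigma_{k-1}>0$, set $L^\psi_{k-1}:=\lambda\Lambda(c_k,p_{k-1})+1$, and let $(z_k,v_k,\varepsilon_k)\in\mathbb{R}^n\times\mathbb{R}^n\times\mathbb{R}_+$ satisfy $$v_k\in\partial_{\varepsilon_k}\Big(\lambda\mathcal L_{c_k}(\cdot;p_{k-1})+\tfrac12\|\cdot-z_{k-1}\|^2\Big)(z_k),\qquad \|v_k\|^2+2\varepsilon_k\le\sigma_{k-1}^2\|v_k+z_{k-1}-z_k\|^2.$$ Define $\delta_k:=\varepsilon_k/\lambda$, $r_k:=v_k+z_{k-1}-z_k$, $$\hat z_k:=\mathrm{argmin}_u\Big\{\lambda\big[\langle\nabla_z\widetilde{\mathcal L}_{c_k}(z_k;p_{k-1}),u-z_k\rangle+h(u)\big]-\langle r_k,u-z_k\rangle+\tfrac{L^\psi_{k-1}}{2}\|u-z_k\|^2\Big\},$$ $w_k:=\frac1\lambda[r_k+L^\psi_{k-1}(z_k-\hat z_k)]$, $p_k:=\Pi_{\mathcal K^*}(p_{k-1}+c_kg(z_k))$, $\hat p_k:=\Pi_{\mathcal K^*}(p_{k-1}+c_kg(\hat z_k))$, $\hat q_k:=\frac{1}{c_k}(p_{k-1}-\hat p_k)$, and $\hat w_k:=w_k+\nabla_z\widetilde{\mathcal L}_{c_k}(\hat z_k;p_{k-1})-\nabla_z\widetilde{\mathcal L}_{c_k}(z_k;p_{k-1})$.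 Then: (a) $w_k\in\nabla f(z_k)+\partial_{\delta_k}h(z_k)+\nabla g(z_k)p_k$, $\ \|w_k\|\le\frac1\lambda\big(1+\sigma_{k-1}\sqrt{L^\psi_{k-1}}\big)\|r_k\|$, and $\delta_k\le\frac{1}{2\lambda}\sigma_{k-1}^2\|r_k\|^2$; (b) $\hat w_k\in\nabla f(\hat z_k)+\partial h(\hat z_k)+\nabla g(\hat z_k)\hat p_k$, $\ \langle g(\hat z_k)+\hat q_k,\hat p_k\rangle=0$, $\ g(\hat z_k)+\hat q_k\preceq_{\mathcal K}0$, $\ \hat p_k\succeq_{\mathcal K^*}0$, and $$\|\hat w_k\|\le\frac1\lambda\big(1+2\sigma_{k-1}\sqrt{L^\psi_{k-1}}\big)\|r_k\|,\qquad \|\hat q_k\|\le\frac{B_g^{(1)}\sigma_{k-1}}{\sqrt{L^\psi_{k-1}}}\|r_k\|+\frac1{c_k}\|p_k-p_{k-1}\|.$$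
   Context: $\mathcal K\subseteq\mathbb{R}^\ell$ is a nonempty closed convex cone, $\mathcal K^*=\{y:\langle y,x\rangle\ge0\ \forall x\in\mathcal K\}$ its dual cone, $u\preceq_{\mathcal K}v$ means $v-u\in\mathcal K$, $\Pi_S$ is the Euclidean projection onto a closed convex set $S$ and $\mathrm{dist}(y,S)$ the Euclidean distance. For a proper function $\varphi$, $\partial_\varepsilon\varphi(z):=\{u:\varphi(z')\ge\varphi(z)+\langle u,z'-z\rangle-\varepsilon\ \forall z'\}$ and $\partial\varphi=\partial_0\varphi$. For differentiable $g:\mathbb{R}^n\to\mathbb{R}^\ell$, $\nabla g(z)\in\mathbb{R}^{n\times\ell}$ is the transpose of the Jacobian, with operator norm $\|\nabla g(z)\|$. $g$ is $\mathcal K$-convex if $g(tz'+(1-t)z)-tg(z')-(1-t)g(z)\preceq_{\mathcal K}0$ for all $z,z'$, $t\in[0,1]$. (B1) $h:\mathbb{R}^n\to(-\infty,\infty]$ is proper, lower semicontinuous, convex, and $K_h$-Lipschitz continuous on its domain for some $K_h>0$; $\mathcal H:=\mathrm{dom}\,h$ is compact with diameter $D_h$. (B2) $f$ is (not necessarily convex and) differentiable on an open set containing $\mathcal H$, and there are $m_f,L_f>0$ with $f(z')-f(z)-\langle\nabla f(z),z'-z\rangle\ge-\frac{m_f}{2}\|z'-z\|^2$ and $\|\nabla f(z')-\nabla f(z)\|\le L_f\|z'-z\|$ for all $z,z'\in\mathcal H$. (B3) $g:\mathbb{R}^n\to\mathbb{R}^\ell$ is $\mathcal K$-convex and differentiable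 with $L_g$-Lipschitz $\nabla g$ on $\mathbb{R}^n$, $L_g>0$. Constants: $B_g^{(0)}:=\sup_{\mathcal H}\|g\|$, $B_g^{(1)}:=\sup_{\mathcal H}\|\nabla g\|$. Functions: $\mathcal L_c(z;p):=f(z)+h(z)+\frac1{2c}[\mathrm{dist}^2(p+cg(z),-\mathcal K)-\|p\|^2]$ (augmented Lagrangian), $\widetilde{\mathcal L}_c(z;p):=f(z)+\frac1{2c}[\mathrm{dist}^2(p+cg(z),-\mathcal K)-\|p\|^2]$, whose $z$-gradient is $\nabla_z\widetilde{\mathcal L}_c(z;p)=\nabla f(z)+\nabla g(z)\Pi_{\mathcal K^*}(p+cg(z))$, and $\Lambda(c,p):=L_f+L_g\|p\|+c(B_g^{(0)}L_g+[B_g^{(1)}]^2)$. *)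

theory Defs
  imports "HOL-Analysis.Analysis"
begin

definition dual_cone :: "'b::euclidean_space set \<Rightarrow> 'b set" where
  "dual_cone K = {y. \<forall>x\<in>K. 0 \<le> y \<bullet> x}"

definition proj :: "'b::euclidean_space set \<Rightarrow> 'b \<Rightarrow> 'b" where
  "proj S y = closest_point S y"

text \<open>epsilon-subdifferential of the extended-real-valued function that equals phi on
  its (effective) domain D and +infinity outside D.  It is empty at points outside D.\<close>
definition eps_subdiff :: "'a::real_inner set \<Rightarrow> ('a \<Rightarrow> real) \<Rightarrow> real \<Rightarrow> 'a \<Rightarrow> 'a set" where
  "eps_subdiff D phi eps z =
     {u. z \<in> D \<and> (\<forall>z'\<in>D. phi z' \<ge> phi z + u \<bullet> (z' - z) - eps)}"

text \<open>nabla g(z) p, where Dg z is the (Frechet) derivative of g at z, i.e. nabla g(z) is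
  the adjoint (transpose of the Jacobian) of Dg z.\<close>
definition nabla_app :: "('a::euclidean_space \<Rightarrow> 'a \<Rightarrow> 'b::euclidean_space) \<Rightarrow> 'a \<Rightarrow> 'b \<Rightarrow> 'a" where
  "nabla_app Dg z p = adjoint (Dg z) p"

text \<open>Augmented Lagrangian L_c(z;p) (the h-part is +infinity outside dom h).\<close>
definition AugL :: "'b::euclidean_space set \<Rightarrow> ('a \<Rightarrow> real) \<Rightarrow> ('a \<Rightarrow> real) \<Rightarrow> ('a \<Rightarrow> 'b)
    \<Rightarrow> real \<Rightarrow> 'a \<Rightarrow> 'b \<Rightarrow> real" where
  "AugL K f h g c z p = f z + h z
     + (1 / (2 * c)) * ((infdist (p + c *\<^sub>R g z) (uminus ` K))\<^sup>2 - (norm p)\<^sup>2)"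

text \<open>Gradient in z of the smooth part tilde L_c(z;p).\<close>
definition grad_tL :: "'b::euclidean_space set \<Rightarrow> ('a::euclidean_space \<Rightarrow> 'a) \<Rightarrow> ('a \<Rightarrow> 'b)
    \<Rightarrow> ('a \<Rightarrow> 'a \<Rightarrow> 'b) \<Rightarrow> real \<Rightarrow> 'a \<Rightarrow> 'b \<Rightarrow> 'a" where
  "grad_tL K gf g Dg c z p = gf z + nabla_app Dg z (proj (dual_cone K) (p + c *\<^sub>R g z))"

definition Bg0 :: "'a set \<Rightarrow> ('a \<Rightarrow> 'b::real_normed_vector) \<Rightarrow> real" where
  "Bg0 H g = Sup ((\<lambda>z. norm (g z)) ` H)"

definition Bg1 :: "'a::euclidean_space set \<Rightarrow> ('a \<Rightarrow> 'a \<Rightarrow> 'b::euclidean_space) \<Rightarrow> real" where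
  "Bg1 H Dg = Sup ((\<lambda>z. onorm (nabla_app Dg z)) ` H)"

definition Lam :: "real \<Rightarrow> real \<Rightarrow> real \<Rightarrow> real \<Rightarrow> real \<Rightarrow> 'b::real_normed_vector \<Rightarrow> real" where
  "Lam Lf Lg B0 B1 c p = Lf + Lg * norm p + c * (B0 * Lg + B1\<^sup>2)"

end

theory Submission
  imports Defs
begin

(* The point zh is the exact proximal point of the problem in which the smooth part of the
   augmented Lagrangian is linearized at zk, so its optimality condition makes
   s = w - grad_tL zk a subgradient of h at zh.  The smooth part f + penalty has a quadratic
   upper model with constant Lam c p0: the descent lemma for f + <pk, g>, plus the fact that
   dist^2(., -K)/2 has gradient proj (dual_cone K) and is 1-smooth (Moreau decomposition).
   Testing the inexact inclusion at zk with zh and using this upper model shows that s is an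
   (epsk / lam)-subgradient of h at zk and that Lpsi |zh - zk|^2 <= 2 epsk <= sigma^2 |r|^2.
   The norm bounds follow from this step-length estimate and the Lipschitz continuity of
   grad_tL and of the multiplier map; complementarity is Moreau's decomposition again. *)

lemma nonneg_of_nonneg_add_mult_at_right_0:
  fixes A B :: real
  assumes "\<And>t. 0 < t \<Longrightarrow> t \<le> 1 \<Longrightarrow> 0 \<le> A + t * B"
  shows "0 \<le> A"
proof (rule tendsto_lowerbound)
  show "((\<lambda>t. A + t * B) \<longlongrightarrow> A) (at_right 0)"
    by (auto intro!: tendsto_eq_intros)
  show "\<forall>\<^sub>F t in at_right 0. 0 \<le> A + t * B"
    unfolding eventually_at_right_field using assms by (intro exI[of _ 1]) auto
qed simp

lemma norm_add_sq:
  fixes x y :: "'a::real_inner"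
  shows "(norm (x + y))\<^sup>2 = (norm x)\<^sup>2 + 2 * (x \<bullet> y) + (norm y)\<^sup>2"
  unfolding power2_norm_eq_inner by (simp add: inner_add_left inner_add_right inner_commute)

lemma norm_le_onorm_of_adjoint_pair:
  fixes M :: "'a::real_inner \<Rightarrow> 'b::real_inner" and N :: "'b \<Rightarrow> 'a"
  assumes "bounded_linear N" and adj: "\<And>x y. M x \<bullet> y = x \<bullet> N y"
  shows "norm (M x) \<le> onorm N * norm x"
proof -
  have "(norm (M x))\<^sup>2 = x \<bullet> N (M x)"
    using adj[of x "M x"] by (simp add: power2_norm_eq_inner)
  also have "\<dots> \<le> norm x * norm (N (M x))" by (rule norm_cauchy_schwarz)
  also have "\<dots> \<le> norm x * (onorm N * norm (M x))"
    by (simp add: mult_left_mono onorm assms(1))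
  finally have "norm (M x) * norm (M x) \<le> (onorm N * norm x) * norm (M x)"
    by (simp add: power2_eq_square algebra_simps)
  then show ?thesis
    using onorm_pos_le[OF assms(1)] by (cases "norm (M x) = 0") (auto simp: mult_le_cancel_right)
qed

lemma descent_lemma:
  fixes \<phi> :: "'a::real_normed_vector \<Rightarrow> real"
  assumes deriv: "\<And>t. 0 \<le> t \<Longrightarrow> t \<le> 1 \<Longrightarrow> (\<phi> has_derivative \<phi>' (x + t *\<^sub>R d)) (at (x + t *\<^sub>R d))"
    and lip: "\<And>t. 0 \<le> t \<Longrightarrow> t \<le> 1 \<Longrightarrow> \<phi>' (x + t *\<^sub>R d) d - \<phi>' x d \<le> L * t * (norm d)\<^sup>2"
  shows "\<phi> (x + d) - \<phi> x - \<phi>' x d \<le> L / 2 * (norm d)\<^sup>2"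
proof -
  define \<psi> where "\<psi> t = \<phi> (x + t *\<^sub>R d) - t * \<phi>' x d - L / 2 * t\<^sup>2 * (norm d)\<^sup>2" for t
  have \<psi>_deriv: "(\<psi> has_real_derivative \<phi>' (x + t *\<^sub>R d) d - \<phi>' x d - L * t * (norm d)\<^sup>2) (at t)"
    if "0 \<le> t" "t \<le> 1" for t
  proof -
    have "((\<lambda>s. x + s *\<^sub>R d) has_derivative (\<lambda>s. s *\<^sub>R d)) (at t)"
      by (auto intro!: derivative_eq_intros)
    from has_derivative_compose[OF this deriv[OF that]]
    have "((\<lambda>s. \<phi> (x + s *\<^sub>R d)) has_derivative (\<lambda>s. \<phi>' (x + t *\<^sub>R d) (s *\<^sub>R d))) (at t)" .
    moreover have "(\<lambda>s. \<phi>' (x + t *\<^sub>R d) (s *\<^sub>R d)) = (*) (\<phi>' (x + t *\<^sub>R d) d)"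
      using linear_scale[OF has_derivative_linear[OF deriv[OF that]]] by (auto simp: mult.commute)
    ultimately have "((\<lambda>s. \<phi> (x + s *\<^sub>R d)) has_real_derivative \<phi>' (x + t *\<^sub>R d) d) (at t)"
      by (simp add: has_field_derivative_def)
    then show ?thesis unfolding \<psi>_def by (auto intro!: derivative_eq_intros)
  qed
  obtain t where "0 < t" "t < 1"
    "\<psi> 1 - \<psi> 0 = \<phi>' (x + t *\<^sub>R d) d - \<phi>' x d - L * t * (norm d)\<^sup>2"
    using MVT2[of 0 1 \<psi>, OF _ \<psi>_deriv] by auto
  with lip[of t] have "\<psi> 1 \<le> \<psi> 0" by simp
  then show ?thesis unfolding \<psi>_def by simp
qed

lemma prox_argmin_subgradient:
  fixes h :: "'a::real_inner \<Rightarrow> real"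
  assumes "convex H" "convex_on H h" "x \<in> H"
    and argmin: "\<forall>u\<in>H. h x + q \<bullet> (x - b) + L / 2 * (norm (x - b))\<^sup>2
                       \<le> h u + q \<bullet> (u - b) + L / 2 * (norm (u - b))\<^sup>2"
  shows "- (q + L *\<^sub>R (x - b)) \<in> eps_subdiff H h 0 x"
  unfolding eps_subdiff_def
proof (intro CollectI conjI ballI)
  fix u assume "u \<in> H"
  define e where "e = u - x"
  define v where "v = x - b"
  define A where "A = h u - h x + (q + L *\<^sub>R v) \<bullet> e"
  \<comment> \<open>compare x with x + t (u - x) and let t tend to 0\<close>
  have "0 \<le> A + t * (L / 2 * (norm e)\<^sup>2)" if "0 < t" "t \<le> 1" for t
  proof -
    have xt: "(1 - t) *\<^sub>R x + t *\<^sub>R u = x + t *\<^sub>R e"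
      by (simp add: e_def algebra_simps)
    have "(1 - t) *\<^sub>R x + t *\<^sub>R u \<in> H"
      using that by (intro convexD[OF assms(1,3) \<open>u \<in> H\<close>]) auto
    then have "x + t *\<^sub>R e \<in> H" unfolding xt .
    with argmin have "h x + q \<bullet> v + L / 2 * (norm v)\<^sup>2
        \<le> h (x + t *\<^sub>R e) + q \<bullet> (x + t *\<^sub>R e - b) + L / 2 * (norm (x + t *\<^sub>R e - b))\<^sup>2"
      unfolding v_def by blast
    moreover have "x + t *\<^sub>R e - b = v + t *\<^sub>R e" by (simp add: v_def)
    ultimately have "h x + q \<bullet> v + L / 2 * (norm v)\<^sup>2
        \<le> h (x + t *\<^sub>R e) + q \<bullet> (v + t *\<^sub>R e) + L / 2 * (norm (v + t *\<^sub>R e))\<^sup>2"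
      by simp
    moreover have "h (x + t *\<^sub>R e) \<le> (1 - t) * h x + t * h u"
      using convex_onD[OF assms(2), of t x u] that assms(3) \<open>u \<in> H\<close> xt by simp
    moreover have "(norm (v + t *\<^sub>R e))\<^sup>2 = (norm v)\<^sup>2 + 2 * t * (v \<bullet> e) + t\<^sup>2 * (norm e)\<^sup>2"
      by (simp add: norm_add_sq power_mult_distrib)
    moreover have "t * (A + t * (L / 2 * (norm e)\<^sup>2))
        = t * (h u - h x) + t * (q \<bullet> e) + L * t * (v \<bullet> e) + L / 2 * t\<^sup>2 * (norm e)\<^sup>2"
      by (simp add: A_def inner_add_left power2_eq_square algebra_simps)
    ultimately have "0 \<le> t * (A + t * (L / 2 * (norm e)\<^sup>2))"
      by (simp add: inner_add_right algebra_simps)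
    then show ?thesis using \<open>0 < t\<close> by (simp add: zero_le_mult_iff)
  qed
  then have "0 \<le> A" by (rule nonneg_of_nonneg_add_mult_at_right_0)
  then show "h x + - (q + L *\<^sub>R (x - b)) \<bullet> (u - x) - 0 \<le> h u"
    by (simp add: A_def e_def v_def inner_diff_left inner_add_left)
qed (fact assms(3))

lemma eps_subdiff_transport:
  assumes "s \<in> eps_subdiff D \<phi> 0 x" "z \<in> D" "\<phi> z - \<phi> x \<le> e + s \<bullet> (z - x)"
  shows "s \<in> eps_subdiff D \<phi> e z"
  unfolding eps_subdiff_def
proof (intro CollectI conjI ballI)
  fix z' assume "z' \<in> D"
  then have "\<phi> z' \<ge> \<phi> x + s \<bullet> (z' - x)"
    using assms(1) by (simp add: eps_subdiff_def)
  with assms(3) show "\<phi> z + s \<bullet> (z' - z) - e \<le> \<phi> z'"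
    by (simp add: inner_diff_right)
qed (fact assms(2))

lemma inexact_prox_gap:
  fixes F h :: "'a::real_inner \<Rightarrow> real"
  assumes "0 \<le> lam" "x \<in> H"
    and incl: "v \<in> eps_subdiff H (\<lambda>z. lam * (F z + h z) + 1 / 2 * (norm (z - z0))\<^sup>2) \<epsilon> z"
    and upper: "F x - F z - G \<bullet> (x - z) \<le> \<Lambda> / 2 * (norm (x - z))\<^sup>2"
  shows "lam * (h z - h x)
    \<le> \<epsilon> - (v + z0 - z) \<bullet> (x - z) + lam * (G \<bullet> (x - z)) + (lam * \<Lambda> + 1) / 2 * (norm (x - z))\<^sup>2"
proof -
  have "lam * F z + lam * h z + 1 / 2 * (norm (z - z0))\<^sup>2 + v \<bullet> (x - z) - \<epsilon>
      \<le> lam * F x + lam * h x + 1 / 2 * (norm (x - z0))\<^sup>2"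
    using incl assms(2) by (simp add: eps_subdiff_def distrib_left)
  moreover have "(norm (x - z0))\<^sup>2 = (norm (z - z0))\<^sup>2 + 2 * ((z - z0) \<bullet> (x - z)) + (norm (x - z))\<^sup>2"
    using norm_add_sq[of "z - z0" "x - z"] by simp
  moreover have "lam * F x - lam * F z - lam * (G \<bullet> (x - z)) \<le> lam * (\<Lambda> / 2 * (norm (x - z))\<^sup>2)"
    using mult_left_mono[OF upper assms(1)] by (simp add: right_diff_distrib)
  moreover have "(v + z0 - z) \<bullet> (x - z) = v \<bullet> (x - z) - (z - z0) \<bullet> (x - z)"
    by (simp add: inner_diff_left inner_add_left)
  moreover have "(lam * \<Lambda> + 1) / 2 * (norm (x - z))\<^sup>2
      = lam * (\<Lambda> / 2 * (norm (x - z))\<^sup>2) + (norm (x - z))\<^sup>2 / 2"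
    by (simp add: algebra_simps)
  ultimately show ?thesis
    unfolding right_diff_distrib by linarith
qed

lemma inexact_prox_refinement:
  fixes F h :: "'a::real_inner \<Rightarrow> real"
  assumes "convex H" "convex_on H h" "0 < lam" "0 \<le> \<Lambda>"
    and incl: "v \<in> eps_subdiff H (\<lambda>z. lam * (F z + h z) + 1 / 2 * (norm (z - z0))\<^sup>2) \<epsilon> z"
    and upper: "F x - F z - G \<bullet> (x - z) \<le> \<Lambda> / 2 * (norm (x - z))\<^sup>2"
  defines "r \<equiv> v + z0 - z" and "L \<equiv> lam * \<Lambda> + 1"
  assumes "x \<in> H"
    and argmin: "\<forall>u\<in>H. lam * (G \<bullet> (x - z) + h x) - r \<bullet> (x - z) + L / 2 * (norm (x - z))\<^sup>2
                     \<le> lam * (G \<bullet> (u - z) + h u) - r \<bullet> (u - z) + L / 2 * (norm (u - z))\<^sup>2"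
  defines "s \<equiv> (1 / lam) *\<^sub>R (r + L *\<^sub>R (z - x)) - G"
  shows "s \<in> eps_subdiff H h 0 x" "s \<in> eps_subdiff H h (\<epsilon> / lam) z"
    "L * (norm (x - z))\<^sup>2 \<le> 2 * \<epsilon>"
proof -
  have "z \<in> H" using incl by (simp add: eps_subdiff_def)
  have scaled: "lam * (G \<bullet> (u - z) + h u) - r \<bullet> (u - z) + L / 2 * (norm (u - z))\<^sup>2
      = lam * (h u + (G - (1 / lam) *\<^sub>R r) \<bullet> (u - z) + L / lam / 2 * (norm (u - z))\<^sup>2)" for u
    using assms(3) by (simp add: inner_diff_left algebra_simps)
  have "\<forall>u\<in>H. h x + (G - (1 / lam) *\<^sub>R r) \<bullet> (x - z) + L / lam / 2 * (norm (x - z))\<^sup>2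
      \<le> h u + (G - (1 / lam) *\<^sub>R r) \<bullet> (u - z) + L / lam / 2 * (norm (u - z))\<^sup>2"
    using argmin assms(3) unfolding scaled by (simp add: mult_le_cancel_left_pos)
  then have "- ((G - (1 / lam) *\<^sub>R r) + (L / lam) *\<^sub>R (x - z)) \<in> eps_subdiff H h 0 x"
    by (rule prox_argmin_subgradient[OF assms(1,2) \<open>x \<in> H\<close>])
  moreover have "- ((G - (1 / lam) *\<^sub>R r) + (L / lam) *\<^sub>R (x - z)) = s"
    unfolding s_def by (simp add: algebra_simps)
  ultimately show sub_x: "s \<in> eps_subdiff H h 0 x" by simp
  have "lam * (s \<bullet> (z - x)) = - (r \<bullet> (x - z)) + lam * (G \<bullet> (x - z)) + L * (norm (x - z))\<^sup>2"
    using assms(3) unfolding s_def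
    by (simp add: inner_diff_left inner_add_left inner_diff_right power2_norm_eq_inner algebra_simps)
  then have gap: "lam * (h z - h x) \<le> \<epsilon> + lam * (s \<bullet> (z - x)) - L / 2 * (norm (x - z))\<^sup>2"
    using inexact_prox_gap[OF less_imp_le[OF assms(3)] \<open>x \<in> H\<close> incl upper]
    unfolding r_def L_def by linarith
  have "L / 2 * (norm (x - z))\<^sup>2 \<ge> 0" using assms(3,4) by (simp add: L_def)
  with gap have "h z - h x \<le> \<epsilon> / lam + s \<bullet> (z - x)"
    using assms(3) by (simp add: field_simps)
  then show "s \<in> eps_subdiff H h (\<epsilon> / lam) z"
    by (rule eps_subdiff_transport[OF sub_x \<open>z \<in> H\<close>])
  have "s \<bullet> (z - x) \<le> h z - h x"
    using sub_x \<open>z \<in> H\<close> unfolding eps_subdiff_def by fastforce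
  then have "lam * (s \<bullet> (z - x)) \<le> lam * (h z - h x)"
    using assms(3) by (simp add: mult_left_mono)
  with gap show "L * (norm (x - z))\<^sup>2 \<le> 2 * \<epsilon>" by linarith
qed

lemma closed_dual_cone: "closed (dual_cone K)"
proof -
  have "dual_cone K = (\<Inter>x\<in>K. {y. x \<bullet> y \<ge> 0})" by (auto simp: dual_cone_def inner_commute)
  then show ?thesis by (simp add: closed_INT closed_halfspace_ge)
qed

lemma convex_dual_cone: "convex (dual_cone K)"
  unfolding dual_cone_def convex_def by (auto simp: inner_add_left)

lemma zero_in_dual_cone: "0 \<in> dual_cone K"
  by (simp add: dual_cone_def)

lemma proj_dual_cone_in: "proj (dual_cone K) y \<in> dual_cone K"
  using closest_point_in_set[OF closed_dual_cone] zero_in_dual_cone by (auto simp: proj_def)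

lemma proj_dual_cone_nonexpansive:
  "norm (proj (dual_cone K) y - proj (dual_cone K) y') \<le> norm (y - y')"
  using closest_point_lipschitz[OF convex_dual_cone closed_dual_cone, of K y y'] zero_in_dual_cone
  by (auto simp: proj_def dist_norm)

lemma norm_proj_dual_cone_le: "norm (proj (dual_cone K) y) \<le> norm y"
  using proj_dual_cone_nonexpansive[of K y 0] closest_point_self[OF zero_in_dual_cone[of K]]
  by (simp add: proj_def)

locale closed_convex_cone =
  fixes K :: "'b::euclidean_space set"
  assumes K_nonempty: "K \<noteq> {}" and closed_K: "closed K" and convex_K: "convex K"
    and cone_K: "cone K"
begin

lemma closest_point_neg_cone:
  fixes y :: 'b
  defines "P \<equiv> closest_point (uminus ` K) y"
  shows "- P \<in> K" "(y - P) \<bullet> P = 0" "y - P \<in> dual_cone K"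
proof -
  let ?N = "uminus ` K"
  have N: "closed ?N" "convex ?N" "?N \<noteq> {}"
    using closed_negations[OF closed_K] convex_negations[OF convex_K] K_nonempty by auto
  obtain a where a: "a \<in> K" "P = - a"
    using closest_point_in_set[OF N(1,3)] unfolding P_def by auto
  then show "- P \<in> K" by simp
  have dot: "(y - P) \<bullet> (k - P) \<le> 0" if "k \<in> ?N" for k
    unfolding P_def using closest_point_dot[OF N(2,1) that] .
  have add_K: "u + v \<in> K" and scale_K: "t *\<^sub>R u \<in> K" if "u \<in> K" "v \<in> K" "0 \<le> t" for u v t
    using convex_cone[of K] convex_K cone_K that by auto
  have "0 \<in> K" using cone_contains_0[OF cone_K] K_nonempty by simp
  then have "(y - P) \<bullet> P \<ge> 0" using dot[of 0] by force
  moreover have "(y - P) \<bullet> P \<le> 0"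
    using dot[of "- (2 *\<^sub>R a)"] scale_K[OF a(1) a(1), of 2] a(2)
    by (auto simp: inner_diff_right algebra_simps)
  ultimately show "(y - P) \<bullet> P = 0" by simp
  show "y - P \<in> dual_cone K"
    unfolding dual_cone_def
  proof safe
    fix x assume "x \<in> K"
    then have "(y - P) \<bullet> (- (a + x) - P) \<le> 0"
      using add_K[OF a(1)] by (intro dot) blast
    moreover have "- (a + x) - P = - x" using a(2) by simp
    ultimately show "0 \<le> (y - P) \<bullet> x" by simp
  qed
qed

lemma moreau_decomposition:
  "proj (dual_cone K) y = y - closest_point (uminus ` K) y"
  unfolding proj_def
proof (rule closest_point_unique[OF convex_dual_cone closed_dual_cone, symmetric], safe)
  let ?P = "closest_point (uminus ` K) y"
  show "y - ?P \<in> dual_cone K" by (rule closest_point_neg_cone(3))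
  fix z assume "z \<in> dual_cone K"
  then have "0 \<le> z \<bullet> (- ?P)"
    using closest_point_neg_cone(1)[of y] unfolding dual_cone_def by blast
  then have "?P \<bullet> z \<le> 0" by (simp add: inner_commute)
  moreover have "(norm (y - z))\<^sup>2 = (norm (y - ?P - z))\<^sup>2 + 2 * ((y - ?P - z) \<bullet> ?P) + (norm ?P)\<^sup>2"
    using norm_add_sq[of "y - ?P - z" ?P] by simp
  moreover have "(y - ?P - z) \<bullet> ?P = - (?P \<bullet> z)"
    using closest_point_neg_cone(2)[of y] by (simp add: inner_diff_left inner_commute[of z])
  ultimately have "(norm ?P)\<^sup>2 \<le> (norm (y - z))\<^sup>2"
    by (smt (verit) zero_le_power2)
  then have "norm ?P \<le> norm (y - z)" by (rule power2_le_imp_le) simp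
  then show "dist y (y - ?P) \<le> dist y z" by (simp add: dist_norm)
qed

lemma proj_dual_cone_diff_in_cone: "proj (dual_cone K) y - y \<in> K"
  using closest_point_neg_cone(1) by (simp add: moreau_decomposition)

lemma proj_dual_cone_orthogonal: "(proj (dual_cone K) y - y) \<bullet> proj (dual_cone K) y = 0"
  using closest_point_neg_cone(2)[of y] by (simp add: moreau_decomposition inner_commute)

lemma infdist_neg_cone: "infdist y (uminus ` K) = norm (proj (dual_cone K) y)"
proof -
  have "closed (uminus ` K)" "uminus ` K \<noteq> {}"
    using closed_negations[OF closed_K] K_nonempty by auto
  then show ?thesis
    by (simp add: infdist_eq_setdist setdist_closest_point moreau_decomposition dist_norm)
qed

(* With infdist_neg_cone: dist^2(., -K)/2 has gradient proj (dual_cone K) and is 1-smooth. *)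
lemma sq_infdist_neg_cone_le:
  "(infdist y' (uminus ` K))\<^sup>2
     \<le> (infdist y (uminus ` K))\<^sup>2 + 2 * (proj (dual_cone K) y \<bullet> (y' - y)) + (norm (y' - y))\<^sup>2"
proof -
  let ?\<pi> = "proj (dual_cone K) y"
  have "y - ?\<pi> \<in> uminus ` K"
    using proj_dual_cone_diff_in_cone[of y] by (metis image_eqI minus_diff_eq)
  then have "infdist y' (uminus ` K) \<le> norm (?\<pi> + (y' - y))"
    using infdist_le[of "y - ?\<pi>" _ y'] by (simp add: dist_norm algebra_simps)
  then have "(infdist y' (uminus ` K))\<^sup>2 \<le> (norm (?\<pi> + (y' - y)))\<^sup>2"
    by (simp add: power_mono infdist_nonneg)
  then show ?thesis by (simp add: norm_add_sq infdist_neg_cone)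
qed

lemma shifted_multiplier_complementarity:
  fixes p u :: 'b
  assumes "0 < c"
  defines "\<pi> \<equiv> proj (dual_cone K) (p + c *\<^sub>R u)"
  shows "(u + (1 / c) *\<^sub>R (p - \<pi>)) \<bullet> \<pi> = 0" "- (u + (1 / c) *\<^sub>R (p - \<pi>)) \<in> K"
proof -
  have eq: "u + (1 / c) *\<^sub>R (p - \<pi>) = - ((1 / c) *\<^sub>R (\<pi> - (p + c *\<^sub>R u)))"
    using assms(1) by (simp add: algebra_simps)
  have "(\<pi> - (p + c *\<^sub>R u)) \<bullet> \<pi> = 0"
    unfolding \<pi>_def by (rule proj_dual_cone_orthogonal)
  then show "(u + (1 / c) *\<^sub>R (p - \<pi>)) \<bullet> \<pi> = 0" by (simp add: eq)
  have "\<pi> - (p + c *\<^sub>R u) \<in> K"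
    unfolding \<pi>_def by (rule proj_dual_cone_diff_in_cone)
  then show "- (u + (1 / c) *\<^sub>R (p - \<pi>)) \<in> K"
    using cone_K assms(1) by (simp add: eq cone_def)
qed

end

definition penalty ::
    "'b::euclidean_space set \<Rightarrow> ('a \<Rightarrow> 'b) \<Rightarrow> real \<Rightarrow> 'b \<Rightarrow> 'a \<Rightarrow> real" where
  "penalty K g c p z = (1 / (2 * c)) * ((infdist (p + c *\<^sub>R g z) (uminus ` K))\<^sup>2 - (norm p)\<^sup>2)"

lemma AugL_eq_penalty: "AugL K f h g c z p = f z + penalty K g c p z + h z"
  by (simp add: AugL_def penalty_def)

lemma (in closed_convex_cone) penalty_upper_bound:
  assumes "0 < c"
  shows "penalty K g c p z' - penalty K g c p z
    \<le> proj (dual_cone K) (p + c *\<^sub>R g z) \<bullet> (g z' - g z) + c / 2 * (norm (g z' - g z))\<^sup>2"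
proof -
  have "(p + c *\<^sub>R g z') - (p + c *\<^sub>R g z) = c *\<^sub>R (g z' - g z)"
    by (simp add: algebra_simps)
  then have "(infdist (p + c *\<^sub>R g z') (uminus ` K))\<^sup>2 - (infdist (p + c *\<^sub>R g z) (uminus ` K))\<^sup>2
      \<le> 2 * c * (proj (dual_cone K) (p + c *\<^sub>R g z) \<bullet> (g z' - g z)) + c\<^sup>2 * (norm (g z' - g z))\<^sup>2"
    using sq_infdist_neg_cone_le[of "p + c *\<^sub>R g z'" "p + c *\<^sub>R g z"] assms
    by (simp add: power_mult_distrib)
  then show ?thesis
    using assms unfolding penalty_def by (simp add: field_simps power2_eq_square)
qed

locale cone_constrained_problem = closed_convex_cone K
  for K :: "'b::euclidean_space set" +
  fixes H :: "'a::euclidean_space set" and f :: "'a \<Rightarrow> real" and gf :: "'a \<Rightarrow> 'a"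
    and g :: "'a \<Rightarrow> 'b" and Dg :: "'a \<Rightarrow> 'a \<Rightarrow> 'b" and Lf Lg :: real
  assumes H_nonempty: "H \<noteq> {}" and compact_H: "compact H" and convex_H: "convex H"
    and f_deriv: "\<exists>U. open U \<and> H \<subseteq> U \<and> (\<forall>z\<in>U. (f has_derivative (\<lambda>x. gf z \<bullet> x)) (at z))"
    and gf_lipschitz: "\<forall>z\<in>H. \<forall>z'\<in>H. norm (gf z' - gf z) \<le> Lf * norm (z' - z)"
    and g_deriv: "\<forall>z. (g has_derivative Dg z) (at z)"
    and nabla_lipschitz:
      "\<forall>z z'. onorm (\<lambda>p. nabla_app Dg z' p - nabla_app Dg z p) \<le> Lg * norm (z' - z)"
    and Lf_nonneg: "0 \<le> Lf" and Lg_nonneg: "0 \<le> Lg"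
begin

lemma linear_Dg: "linear (Dg z)"
  using g_deriv has_derivative_linear by blast

lemma Dg_adjoint: "Dg z x \<bullet> p = x \<bullet> nabla_app Dg z p"
  by (simp add: nabla_app_def adjoint_works[OF linear_Dg])

lemma bounded_linear_nabla: "bounded_linear (nabla_app Dg z)"
  unfolding nabla_app_def using adjoint_linear[OF linear_Dg] linear_conv_bounded_linear by blast

lemma norm_nabla_diff_le:
  "norm (nabla_app Dg z' p - nabla_app Dg z p) \<le> Lg * norm (z' - z) * norm p"
proof -
  have "norm (nabla_app Dg z' p - nabla_app Dg z p)
      \<le> onorm (\<lambda>p. nabla_app Dg z' p - nabla_app Dg z p) * norm p"
    by (intro onorm bounded_linear_sub bounded_linear_nabla)
  also have "\<dots> \<le> Lg * norm (z' - z) * norm p"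
    using nabla_lipschitz by (simp add: mult_right_mono)
  finally show ?thesis .
qed

lemma onorm_nabla_le_Bg1:
  assumes "z \<in> H"
  shows "onorm (nabla_app Dg z) \<le> Bg1 H Dg"
proof -
  obtain z1 where "z1 \<in> H" using H_nonempty by auto
  obtain R where R: "\<forall>z\<in>H. norm z \<le> R"
    using compact_imp_bounded[OF compact_H] by (auto simp: bounded_iff)
  have "onorm (nabla_app Dg z) \<le> Lg * (R + norm z1) + onorm (nabla_app Dg z1)" if "z \<in> H" for z
  proof -
    have "onorm (\<lambda>p. (nabla_app Dg z p - nabla_app Dg z1 p) + nabla_app Dg z1 p)
        \<le> onorm (\<lambda>p. nabla_app Dg z p - nabla_app Dg z1 p) + onorm (nabla_app Dg z1)"
      by (intro onorm_triangle bounded_linear_sub bounded_linear_nabla)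
    moreover have "onorm (\<lambda>p. nabla_app Dg z p - nabla_app Dg z1 p) \<le> Lg * norm (z - z1)"
      using nabla_lipschitz by blast
    moreover have "Lg * norm (z - z1) \<le> Lg * (R + norm z1)"
      using R that norm_triangle_ineq4[of z z1] Lg_nonneg by (intro mult_left_mono) auto
    ultimately show ?thesis by simp
  qed
  then have "bdd_above ((\<lambda>z. onorm (nabla_app Dg z)) ` H)" by (rule bdd_aboveI2)
  then show ?thesis unfolding Bg1_def by (rule cSup_upper[OF imageI[OF assms]])
qed

lemma norm_nabla_le:
  assumes "z \<in> H"
  shows "norm (nabla_app Dg z p) \<le> Bg1 H Dg * norm p"
  using onorm[OF bounded_linear_nabla] onorm_nabla_le_Bg1[OF assms]
  by (meson mult_right_mono norm_ge_zero order_trans)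

lemma Bg1_nonneg: "0 \<le> Bg1 H Dg"
  using H_nonempty onorm_nabla_le_Bg1 onorm_pos_le[OF bounded_linear_nabla]
  by (meson all_not_in_conv order_trans)

lemma g_lipschitz:
  assumes "z \<in> H" "z' \<in> H"
  shows "norm (g z' - g z) \<le> Bg1 H Dg * norm (z' - z)"
proof (rule differentiable_bound[OF convex_H _ _ assms(2,1)])
  show "(g has_derivative Dg x) (at x within H)" for x
    using g_deriv has_derivative_at_withinI by blast
  show "onorm (Dg x) \<le> Bg1 H Dg" if "x \<in> H" for x
  proof (rule onorm_le)
    fix v
    have "norm (Dg x v) \<le> onorm (nabla_app Dg x) * norm v"
      by (rule norm_le_onorm_of_adjoint_pair[OF bounded_linear_nabla Dg_adjoint])
    then show "norm (Dg x v) \<le> Bg1 H Dg * norm v"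
      using onorm_nabla_le_Bg1[OF that] by (meson mult_right_mono norm_ge_zero order_trans)
  qed
qed

lemma norm_g_le_Bg0:
  assumes "z \<in> H"
  shows "norm (g z) \<le> Bg0 H g"
proof -
  have "continuous_on H g"
    using g_deriv by (meson differentiable_at_imp_differentiable_on
        differentiable_imp_continuous_on differentiableI)
  then have "bounded ((\<lambda>z. norm (g z)) ` H)"
    by (intro compact_imp_bounded compact_continuous_image continuous_on_norm compact_H)
  then show ?thesis
    unfolding Bg0_def using assms by (intro cSup_upper imageI bounded_imp_bdd_above)
qed

lemma Bg0_nonneg: "0 \<le> Bg0 H g"
  using H_nonempty norm_g_le_Bg0 by (meson all_not_in_conv norm_ge_zero order_trans)

lemma Lam_nonneg:
  assumes "0 \<le> c"
  shows "0 \<le> Lam Lf Lg (Bg0 H g) (Bg1 H Dg) c p"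
  unfolding Lam_def using assms Lf_nonneg Lg_nonneg Bg0_nonneg by simp

lemma norm_multiplier_le:
  assumes "0 \<le> c" "z \<in> H"
  shows "norm (proj (dual_cone K) (p + c *\<^sub>R g z)) \<le> norm p + c * Bg0 H g"
proof -
  have "norm (proj (dual_cone K) (p + c *\<^sub>R g z)) \<le> norm p + c * norm (g z)"
    using norm_proj_dual_cone_le[of K "p + c *\<^sub>R g z"] norm_triangle_ineq[of p "c *\<^sub>R g z"] assms(1)
    by simp
  also have "\<dots> \<le> norm p + c * Bg0 H g"
    using norm_g_le_Bg0[OF assms(2)] assms(1) by (simp add: mult_left_mono)
  finally show ?thesis .
qed

lemma multiplier_lipschitz:
  assumes "0 \<le> c" "z \<in> H" "z' \<in> H"
  shows "norm (proj (dual_cone K) (p + c *\<^sub>R g z') - proj (dual_cone K) (p + c *\<^sub>R g z))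
    \<le> c * Bg1 H Dg * norm (z' - z)"
proof -
  have "norm (proj (dual_cone K) (p + c *\<^sub>R g z') - proj (dual_cone K) (p + c *\<^sub>R g z))
      \<le> c * norm (g z' - g z)"
    using proj_dual_cone_nonexpansive[of K "p + c *\<^sub>R g z'" "p + c *\<^sub>R g z"] assms(1)
    by (simp add: scaleR_diff_right[symmetric])
  also have "\<dots> \<le> c * Bg1 H Dg * norm (z' - z)"
    using g_lipschitz[OF assms(2,3)] assms(1) by (metis mult.assoc mult_left_mono)
  finally show ?thesis .
qed

lemma lagrangian_has_derivative:
  assumes "y \<in> H"
  shows "((\<lambda>u. f u + q \<bullet> g u) has_derivative (\<lambda>v. (gf y + nabla_app Dg y q) \<bullet> v)) (at y)"
proof -
  obtain U where "H \<subseteq> U" "\<forall>y\<in>U. (f has_derivative (\<lambda>x. gf y \<bullet> x)) (at y)"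
    using f_deriv by blast
  then have "((\<lambda>u. f u + q \<bullet> g u) has_derivative (\<lambda>v. gf y \<bullet> v + q \<bullet> Dg y v)) (at y)"
    using assms g_deriv by (auto intro!: has_derivative_add has_derivative_inner_right)
  moreover have "q \<bullet> Dg y v = nabla_app Dg y q \<bullet> v" for v
    using Dg_adjoint[of y v q] by (simp add: inner_commute)
  ultimately show ?thesis by (simp add: inner_add_left)
qed

lemma lagrangian_gradient_lipschitz:
  assumes "z \<in> H" "z' \<in> H"
  shows "norm ((gf z' + nabla_app Dg z' q) - (gf z + nabla_app Dg z q))
    \<le> (Lf + Lg * norm q) * norm (z' - z)"
proof -
  have "norm (gf z' - gf z) \<le> Lf * norm (z' - z)"
    using gf_lipschitz assms by blast
  moreover have "norm (nabla_app Dg z' q - nabla_app Dg z q) \<le> Lg * norm (z' - z) * norm q"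
    by (rule norm_nabla_diff_le)
  ultimately show ?thesis
    using norm_triangle_ineq[of "gf z' - gf z" "nabla_app Dg z' q - nabla_app Dg z q"]
    by (simp add: algebra_simps)
qed

lemma lagrangian_descent:
  assumes "z \<in> H" "z' \<in> H"
  shows "f z' + q \<bullet> g z' - (f z + q \<bullet> g z) - (gf z + nabla_app Dg z q) \<bullet> (z' - z)
    \<le> (Lf + Lg * norm q) / 2 * (norm (z' - z))\<^sup>2"
proof -
  define d where "d = z' - z"
  define G where "G y = gf y + nabla_app Dg y q" for y
  have seg: "z + t *\<^sub>R d \<in> H" if "0 \<le> t" "t \<le> 1" for t
    using convexD[OF convex_H assms, of "1 - t" t] that by (simp add: d_def algebra_simps)
  have "(\<lambda>u. f u + q \<bullet> g u) (z + d) - (\<lambda>u. f u + q \<bullet> g u) z - G z \<bullet> d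
      \<le> (Lf + Lg * norm q) / 2 * (norm d)\<^sup>2"
  proof (rule descent_lemma[where \<phi>' = "\<lambda>y v. G y \<bullet> v"])
    fix t :: real assume t: "0 \<le> t" "t \<le> 1"
    show "((\<lambda>u. f u + q \<bullet> g u) has_derivative (\<lambda>v. G (z + t *\<^sub>R d) \<bullet> v)) (at (z + t *\<^sub>R d))"
      unfolding G_def by (rule lagrangian_has_derivative[OF seg[OF t]])
    have "G (z + t *\<^sub>R d) \<bullet> d - G z \<bullet> d \<le> norm (G (z + t *\<^sub>R d) - G z) * norm d"
      unfolding inner_diff_left[symmetric] by (rule norm_cauchy_schwarz)
    also have "\<dots> \<le> (Lf + Lg * norm q) * (t * norm d) * norm d"
      using lagrangian_gradient_lipschitz[OF assms(1) seg[OF t], of q] t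
      by (intro mult_right_mono) (simp_all add: G_def)
    finally show "G (z + t *\<^sub>R d) \<bullet> d - G z \<bullet> d \<le> (Lf + Lg * norm q) * t * (norm d)\<^sup>2"
      by (simp add: power2_eq_square mult.assoc)
  qed
  then show ?thesis by (simp add: d_def G_def)
qed

lemma smooth_part_upper_model:
  assumes "0 < c" "z \<in> H" "z' \<in> H"
  shows "f z' + penalty K g c p z' - (f z + penalty K g c p z) - grad_tL K gf g Dg c z p \<bullet> (z' - z)
    \<le> Lam Lf Lg (Bg0 H g) (Bg1 H Dg) c p / 2 * (norm (z' - z))\<^sup>2"
proof -
  let ?q = "proj (dual_cone K) (p + c *\<^sub>R g z)" and ?d = "norm (z' - z)"
  have "f z' + ?q \<bullet> g z' - (f z + ?q \<bullet> g z) - (gf z + nabla_app Dg z ?q) \<bullet> (z' - z)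
      \<le> (Lf + Lg * norm ?q) / 2 * ?d\<^sup>2"
    by (rule lagrangian_descent[OF assms(2,3)])
  moreover have "(Lf + Lg * norm ?q) / 2 * ?d\<^sup>2 \<le> (Lf + Lg * (norm p + c * Bg0 H g)) / 2 * ?d\<^sup>2"
    using norm_multiplier_le[of c z p] assms Lg_nonneg
    by (intro mult_right_mono divide_right_mono add_left_mono mult_left_mono) simp_all
  moreover have "c / 2 * (norm (g z' - g z))\<^sup>2 \<le> c / 2 * (Bg1 H Dg * ?d)\<^sup>2"
    using g_lipschitz[OF assms(2,3)] assms(1) by (simp add: power_mono)
  moreover have "Lam Lf Lg (Bg0 H g) (Bg1 H Dg) c p / 2 * ?d\<^sup>2
      = (Lf + Lg * (norm p + c * Bg0 H g)) / 2 * ?d\<^sup>2 + c / 2 * (Bg1 H Dg * ?d)\<^sup>2"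
    by (simp add: Lam_def power_mult_distrib algebra_simps)
  ultimately show ?thesis
    using penalty_upper_bound[OF assms(1), of g p z' z]
    by (simp add: grad_tL_def inner_diff_right)
qed

lemma grad_tL_lipschitz:
  assumes "0 \<le> c" "z \<in> H" "z' \<in> H"
  shows "norm (grad_tL K gf g Dg c z' p - grad_tL K gf g Dg c z p)
    \<le> Lam Lf Lg (Bg0 H g) (Bg1 H Dg) c p * norm (z' - z)"
proof -
  let ?q = "proj (dual_cone K) (p + c *\<^sub>R g z)" and ?q' = "proj (dual_cone K) (p + c *\<^sub>R g z')"
    and ?d = "norm (z' - z)"
  have eq: "grad_tL K gf g Dg c z' p - grad_tL K gf g Dg c z p
      = (gf z' - gf z) + (nabla_app Dg z' ?q' - nabla_app Dg z ?q') + nabla_app Dg z (?q' - ?q)"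
    using linear_diff[OF bounded_linear.linear[OF bounded_linear_nabla]]
    by (simp add: grad_tL_def algebra_simps)
  have "norm (gf z' - gf z) \<le> Lf * ?d" using gf_lipschitz assms(2,3) by blast
  moreover have "norm (nabla_app Dg z' ?q' - nabla_app Dg z ?q') \<le> Lg * ?d * (norm p + c * Bg0 H g)"
    using norm_nabla_diff_le[where z' = z' and z = z and p = ?q'] norm_multiplier_le[OF assms(1,3), of p] Lg_nonneg
    by (meson mult_left_mono norm_ge_zero order_trans zero_le_mult_iff)
  moreover have "norm (nabla_app Dg z (?q' - ?q)) \<le> Bg1 H Dg * (c * Bg1 H Dg * ?d)"
    using norm_nabla_le[OF assms(2), of "?q' - ?q"] multiplier_lipschitz[OF assms, of p] Bg1_nonneg
    by (meson mult_left_mono order_trans)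
  moreover have "Lam Lf Lg (Bg0 H g) (Bg1 H Dg) c p * ?d
      = Lf * ?d + Lg * ?d * (norm p + c * Bg0 H g) + Bg1 H Dg * (c * Bg1 H Dg * ?d)"
    by (simp add: Lam_def power2_eq_square algebra_simps)
  ultimately show ?thesis
    unfolding eq
    using norm_triangle_ineq[of "gf z' - gf z + (nabla_app Dg z' ?q' - nabla_app Dg z ?q')"
        "nabla_app Dg z (?q' - ?q)"]
      norm_triangle_ineq[of "gf z' - gf z" "nabla_app Dg z' ?q' - nabla_app Dg z ?q'"]
    by linarith
qed

end

lemma sqrt_step_bounds:
  fixes L \<sigma> d \<rho> :: real
  assumes "1 \<le> L" "0 < \<sigma>" "0 \<le> d" "0 \<le> \<rho>" "L * d\<^sup>2 \<le> \<sigma>\<^sup>2 * \<rho>\<^sup>2"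
  shows "L * d \<le> \<sigma> * sqrt L * \<rho>" "d \<le> \<sigma> / sqrt L * \<rho>"
proof -
  have "sqrt L * d \<le> \<sigma> * \<rho>"
    using real_sqrt_le_mono[OF assms(5)] assms(1-4) by (simp add: real_sqrt_mult)
  have "L * d = sqrt L * (sqrt L * d)" using assms(1) by simp
  also have "\<dots> \<le> sqrt L * (\<sigma> * \<rho>)"
    using \<open>sqrt L * d \<le> \<sigma> * \<rho>\<close> by (rule mult_left_mono) (use assms(1) in simp)
  finally show "L * d \<le> \<sigma> * sqrt L * \<rho>" by (simp add: algebra_simps)
  show "d \<le> \<sigma> / sqrt L * \<rho>"
    using \<open>sqrt L * d \<le> \<sigma> * \<rho>\<close> assms(1) by (simp add: field_simps)
qed

lemma (in cone_constrained_problem) one_le_Lpsi: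
  assumes "0 \<le> lam" "0 \<le> c"
  shows "1 \<le> lam * Lam Lf Lg (Bg0 H g) (Bg1 H Dg) c p + 1"
  using Lam_nonneg[OF assms(2), of p] assms(1) by simp

lemma (in cone_constrained_problem) refined_residual_bounds:
  fixes lam c \<sigma> :: real and p0 :: 'b and r zk zh :: 'a
  assumes "0 < lam" "0 < c" "0 < \<sigma>" "zk \<in> H" "zh \<in> H"
  defines "Lpsi \<equiv> lam * Lam Lf Lg (Bg0 H g) (Bg1 H Dg) c p0 + 1"
  assumes step: "Lpsi * (norm (zh - zk))\<^sup>2 \<le> \<sigma>\<^sup>2 * (norm r)\<^sup>2"
  defines "w \<equiv> (1 / lam) *\<^sub>R (r + Lpsi *\<^sub>R (zk - zh))"
  shows "norm w \<le> (1 / lam) * (1 + \<sigma> * sqrt Lpsi) * norm r"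
    and "norm (w + grad_tL K gf g Dg c zh p0 - grad_tL K gf g Dg c zk p0)
      \<le> (1 / lam) * (1 + 2 * \<sigma> * sqrt Lpsi) * norm r"
proof -
  let ?d = "norm (zh - zk)" and ?gradL = "\<lambda>z. grad_tL K gf g Dg c z p0"
  have "1 \<le> Lpsi" unfolding Lpsi_def using assms(1,2) by (intro one_le_Lpsi) simp_all
  note step_bound = sqrt_step_bounds(1)[OF this assms(3) norm_ge_zero norm_ge_zero step]
  have "norm w \<le> (1 / lam) * (norm r + Lpsi * ?d)"
    unfolding w_def using assms(1) \<open>1 \<le> Lpsi\<close> norm_triangle_ineq[of r "Lpsi *\<^sub>R (zk - zh)"]
    by (simp add: norm_minus_commute divide_right_mono)
  also have "\<dots> \<le> (1 / lam) * (norm r + \<sigma> * sqrt Lpsi * norm r)"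
    using step_bound assms(1) by (intro mult_left_mono add_left_mono) simp_all
  finally show norm_w: "norm w \<le> (1 / lam) * (1 + \<sigma> * sqrt Lpsi) * norm r"
    by (simp add: algebra_simps)
  have "norm (?gradL zh - ?gradL zk) \<le> Lam Lf Lg (Bg0 H g) (Bg1 H Dg) c p0 * ?d"
    using grad_tL_lipschitz assms(2,4,5) by simp
  also have "\<dots> \<le> (1 / lam) * (Lpsi * ?d)"
    using assms(1) by (simp add: Lpsi_def field_simps)
  also have "\<dots> \<le> (1 / lam) * (\<sigma> * sqrt Lpsi * norm r)"
    using step_bound assms(1) by (intro mult_left_mono) simp_all
  finally have "norm (?gradL zh - ?gradL zk) \<le> (1 / lam) * (\<sigma> * sqrt Lpsi * norm r)" .
  moreover have "(1 / lam) * (1 + 2 * \<sigma> * sqrt Lpsi) * norm r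
      = (1 / lam) * (1 + \<sigma> * sqrt Lpsi) * norm r + (1 / lam) * (\<sigma> * sqrt Lpsi * norm r)"
    by (simp add: algebra_simps)
  ultimately show "norm (w + ?gradL zh - ?gradL zk) \<le> (1 / lam) * (1 + 2 * \<sigma> * sqrt Lpsi) * norm r"
    using norm_w norm_triangle_ineq[of w "?gradL zh - ?gradL zk"] by (simp add: add_diff_eq)
qed

lemma (in cone_constrained_problem) refined_multiplier_bound:
  fixes lam c \<sigma> :: real and p0 :: 'b and r zk zh :: 'a
  assumes "0 < lam" "0 < c" "0 < \<sigma>" "zk \<in> H" "zh \<in> H"
  defines "Lpsi \<equiv> lam * Lam Lf Lg (Bg0 H g) (Bg1 H Dg) c p0 + 1"
  assumes step: "Lpsi * (norm (zh - zk))\<^sup>2 \<le> \<sigma>\<^sup>2 * (norm r)\<^sup>2"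
  defines "pk \<equiv> proj (dual_cone K) (p0 + c *\<^sub>R g zk)"
    and "ph \<equiv> proj (dual_cone K) (p0 + c *\<^sub>R g zh)"
  shows "norm ((1 / c) *\<^sub>R (p0 - ph)) \<le> Bg1 H Dg * \<sigma> / sqrt Lpsi * norm r + (1 / c) * norm (pk - p0)"
proof -
  have "1 \<le> Lpsi" unfolding Lpsi_def using assms(1,2) by (intro one_le_Lpsi) simp_all
  have "norm (ph - pk) \<le> c * Bg1 H Dg * norm (zh - zk)"
    unfolding ph_def pk_def using multiplier_lipschitz assms(2,4,5) by simp
  also have "\<dots> \<le> c * Bg1 H Dg * (\<sigma> / sqrt Lpsi * norm r)"
    using sqrt_step_bounds(2)[OF \<open>1 \<le> Lpsi\<close> assms(3) norm_ge_zero norm_ge_zero step]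
      assms(2) Bg1_nonneg
    by (intro mult_left_mono) simp_all
  finally have "norm (p0 - ph) \<le> norm (pk - p0) + c * Bg1 H Dg * (\<sigma> / sqrt Lpsi * norm r)"
    using norm_triangle_ineq[of "p0 - pk" "pk - ph"] by (simp add: norm_minus_commute)
  then have "(1 / c) * norm (p0 - ph)
      \<le> (1 / c) * (norm (pk - p0) + c * Bg1 H Dg * (\<sigma> / sqrt Lpsi * norm r))"
    by (rule mult_left_mono) (use assms(2) in simp)
  moreover have "norm ((1 / c) *\<^sub>R (p0 - ph)) = (1 / c) * norm (p0 - ph)"
    using assms(2) by simp
  ultimately show ?thesis
    using assms(2) by (simp add: field_simps)
qed

theorem proposition3p3:
  fixes K :: "'b::euclidean_space set"
    and H :: "'a::euclidean_space set"
    and h f :: "'a \<Rightarrow> real" and gf :: "'a \<Rightarrow> 'a"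
    and g :: "'a \<Rightarrow> 'b" and Dg :: "'a \<Rightarrow> 'a \<Rightarrow> 'b"
    and Kh mf Lf Lg lam c \<sigma> \<epsilon>k :: real
    and p0 :: 'b and z0 zk vk zh :: 'a
  assumes K_cone: "K \<noteq> {}" "closed K" "convex K" "cone K"
    \<comment> \<open>(B1): h is +infinity outside H = dom h; proper, lsc, convex, Lipschitz on H; H compact\<close>
    and B1: "H \<noteq> {}" "compact H" "convex H" "convex_on H h" "continuous_on H h" "Kh > 0"
      "\<forall>z\<in>H. \<forall>z'\<in>H. \<bar>h z' - h z\<bar> \<le> Kh * norm (z' - z)"
    \<comment> \<open>(B2)\<close>
    and B2: "\<exists>U. open U \<and> H \<subseteq> U \<and> (\<forall>z\<in>U. (f has_derivative (\<lambda>x. gf z \<bullet> x)) (at z))"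
      "mf > 0" "Lf > 0"
      "\<forall>z\<in>H. \<forall>z'\<in>H. f z' - f z - gf z \<bullet> (z' - z) \<ge> - (mf / 2) * (norm (z' - z))\<^sup>2"
      "\<forall>z\<in>H. \<forall>z'\<in>H. norm (gf z' - gf z) \<le> Lf * norm (z' - z)"
    \<comment> \<open>(B3)\<close>
    and B3: "\<forall>z z' t. 0 \<le> t \<and> t \<le> 1 \<longrightarrow>
               t *\<^sub>R g z' + (1 - t) *\<^sub>R g z - g (t *\<^sub>R z' + (1 - t) *\<^sub>R z) \<in> K"
      "\<forall>z. (g has_derivative Dg z) (at z)"
      "Lg > 0"
      "\<forall>z z'. onorm (\<lambda>p. nabla_app Dg z' p - nabla_app Dg z p) \<le> Lg * norm (z' - z)"
    and params: "lam > 0" "c > 0" "\<sigma> > 0" "\<epsilon>k \<ge> 0"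
  defines "Lpsi \<equiv> lam * Lam Lf Lg (Bg0 H g) (Bg1 H Dg) c p0 + 1"
  assumes incl: "vk \<in> eps_subdiff H
                   (\<lambda>z. lam * AugL K f h g c z p0 + (1/2) * (norm (z - z0))\<^sup>2) \<epsilon>k zk"
    and ineq: "(norm vk)\<^sup>2 + 2 * \<epsilon>k \<le> \<sigma>\<^sup>2 * (norm (vk + z0 - zk))\<^sup>2"
  defines "\<delta> \<equiv> \<epsilon>k / lam"
  defines "r \<equiv> vk + z0 - zk"
  assumes zh_argmin: "zh \<in> H"
      "\<forall>u\<in>H. lam * (grad_tL K gf g Dg c zk p0 \<bullet> (zh - zk) + h zh) - r \<bullet> (zh - zk)
                + Lpsi / 2 * (norm (zh - zk))\<^sup>2
             \<le> lam * (grad_tL K gf g Dg c zk p0 \<bullet> (u - zk) + h u) - r \<bullet> (u - zk)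
                + Lpsi / 2 * (norm (u - zk))\<^sup>2"
  defines "w \<equiv> (1 / lam) *\<^sub>R (r + Lpsi *\<^sub>R (zk - zh))"
  defines "pk \<equiv> proj (dual_cone K) (p0 + c *\<^sub>R g zk)"
  defines "ph \<equiv> proj (dual_cone K) (p0 + c *\<^sub>R g zh)"
  defines "qh \<equiv> (1 / c) *\<^sub>R (p0 - ph)"
  defines "wh \<equiv> w + grad_tL K gf g Dg c zh p0 - grad_tL K gf g Dg c zk p0"
  shows
    "(w \<in> (\<lambda>u. gf zk + u + nabla_app Dg zk pk) ` eps_subdiff H h \<delta> zk
     \<and> norm w \<le> (1 / lam) * (1 + \<sigma> * sqrt Lpsi) * norm r
     \<and> \<delta> \<le> (1 / (2 * lam)) * \<sigma>\<^sup>2 * (norm r)\<^sup>2)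
     \<and> (wh \<in> (\<lambda>u. gf zh + u + nabla_app Dg zh ph) ` eps_subdiff H h 0 zh
     \<and> (g zh + qh) \<bullet> ph = 0
     \<and> - (g zh + qh) \<in> K
     \<and> ph \<in> dual_cone K
     \<and> norm wh \<le> (1 / lam) * (1 + 2 * \<sigma> * sqrt Lpsi) * norm r
     \<and> norm qh \<le> Bg1 H Dg * \<sigma> / sqrt Lpsi * norm r + (1 / c) * norm (pk - p0))"
proof -
  interpret cone_constrained_problem K H f gf g Dg Lf Lg
    using K_cone B1(1-3) B2(1,3,5) B3(2-4) by unfold_locales auto
  define \<Lambda> where "\<Lambda> = Lam Lf Lg (Bg0 H g) (Bg1 H Dg) c p0"
  define G where "G = grad_tL K gf g Dg c zk p0"
  have zkH: "zk \<in> H" using incl by (simp add: eps_subdiff_def)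
  have "0 \<le> \<Lambda>" unfolding \<Lambda>_def using params(2) by (intro Lam_nonneg) simp
  have incl': "vk \<in> eps_subdiff H
      (\<lambda>z. lam * ((\<lambda>z. f z + penalty K g c p0 z) z + h z) + 1 / 2 * (norm (z - z0))\<^sup>2) \<epsilon>k zk"
    using incl by (simp add: AugL_eq_penalty)
  note refined = inexact_prox_refinement[OF B1(3,4) params(1) \<open>0 \<le> \<Lambda>\<close> incl'
      smooth_part_upper_model[OF params(2) zkH zh_argmin(1), of p0, folded \<Lambda>_def] zh_argmin(1)]
  have sub: "w - G \<in> eps_subdiff H h 0 zh" "w - G \<in> eps_subdiff H h \<delta> zk"
    and "Lpsi * (norm (zh - zk))\<^sup>2 \<le> 2 * \<epsilon>k"
    using refined zh_argmin(2) unfolding w_def r_def Lpsi_def \<delta>_def G_def \<Lambda>_def by auto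
  moreover have eps_le: "2 * \<epsilon>k \<le> \<sigma>\<^sup>2 * (norm r)\<^sup>2"
    using ineq zero_le_power2[of "norm vk"] unfolding r_def by linarith
  ultimately have step: "Lpsi * (norm (zh - zk))\<^sup>2 \<le> \<sigma>\<^sup>2 * (norm r)\<^sup>2" by linarith
  note residual_bounds =
      refined_residual_bounds[OF params(1-3) zkH zh_argmin(1) step[unfolded Lpsi_def],
        folded Lpsi_def, folded w_def, folded wh_def]
    and multiplier_bound =
      refined_multiplier_bound[OF params(1-3) zkH zh_argmin(1) step[unfolded Lpsi_def],
        folded Lpsi_def pk_def ph_def, folded qh_def]
  have "w \<in> (\<lambda>u. gf zk + u + nabla_app Dg zk pk) ` eps_subdiff H h \<delta> zk"
    by (rule image_eqI[OF _ sub(2)]) (simp add: G_def pk_def grad_tL_def)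
  moreover have "wh \<in> (\<lambda>u. gf zh + u + nabla_app Dg zh ph) ` eps_subdiff H h 0 zh"
    by (rule image_eqI[OF _ sub(1)]) (simp add: wh_def G_def ph_def grad_tL_def)
  moreover have "\<delta> \<le> (1 / (2 * lam)) * \<sigma>\<^sup>2 * (norm r)\<^sup>2"
    using eps_le params(1) unfolding \<delta>_def by (simp add: field_simps)
  moreover have "ph \<in> dual_cone K" unfolding ph_def by (rule proj_dual_cone_in)
  ultimately show ?thesis
    using residual_bounds multiplier_bound
      shifted_multiplier_complementarity[OF params(2), of "g zh" p0, folded ph_def qh_def]
    by blast
qed

end
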